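(* If $[w,n] \in \mathbb{W}$ and $\alpha \vDash \ell(w)$ are such that $\mathrm{Des}(w) = I(\alpha)$ then $\Psi_{\leq}([w,n]) = L_\alpha$, $\Psi_{>}([w,n]) = L_{\alpha^{\tt c}}$, $\Psi_{\geq}([w^{\tt r},n]) = L_{\alpha^{\tt r}}$, and $\Psi_{<}([w^{\tt r},n]) = L_{\alpha^{\tt t}}$.
   Context: Let $\Bbbk$ be a field. For a word $w=w_1\cdots w_m$ of positive integers with $\max(w)\le n$, $[w,n]$ is the linear endomorphism of the $\Bbbk$-span of all words sending a word $v$ of length $n$ to $v_{w_1}\cdots v_{w_m}$ and others to $0$; $\mathbb{W}$ is the set of these and $\textbf{W}$ their span, a graded bialgebra (degree $\ell(w)$) with product $[v,m]\otimes[w,n]\mapsto[v\sqcup\!\sqcup(w\uparrow m),m+n]$ and deconcatenation coproduct $\Delta_\odot([w,n])=\sum_i[w_1\cdots w_i,n]\otimes[w_{i+1}\cdots w_m,n]$, counit $1$ on $[\emptyset,n]$ and $0$ otherwise. Let $\zeta_\le:\textbf{W}\to\Bbbk$ send $[w,n]$ to $1$ if $w$ is weakly increasing and $0$ otherwise; $\zeta_\ge,\zeta_<,\zeta_>$ are defined likewise with weakly decreasing, strictly increasing, strictly decreasing. For $\bullet\in\{\le,\ge,<,>\}$, $\Psi_\bullet:\textbf{W}\to\textsf{QSym}$ is $\Psi_\bullet(x)=\sum_\alpha(\zeta_\bullet)_\alpha(x)M_\alpha$, where $M_\alpha$ is the monomial quasi-symmetric function and, for $\alpha=(\alpha_1,\dots,\alpha_m)$,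 $(\zeta_\bullet)_\alpha$ is the iterated coproduct into $\textbf{W}^{\otimes m}$, followed by projection onto degrees $\alpha_1,\dots,\alpha_m$, $\zeta_\bullet^{\otimes m}$, and multiplication (with $(\zeta_\bullet)_\emptyset$ the counit); it is the unique combinatorial bialgebra morphism $(\textbf{W},\zeta_\bullet)\to(\textsf{QSym},\zeta_{\textsf{QSym}})$. For $\alpha=(\alpha_1,\dots,\alpha_l)\vDash n$, $I(\alpha)=\{\alpha_1,\alpha_1+\alpha_2,\dots,\alpha_1+\cdots+\alpha_{l-1}\}$; $L_\alpha=\sum_{I(\alpha)\subseteq I(\beta)}M_\beta$ is the fundamental quasi-symmetric function; $\alpha^{\tt r}=(\alpha_l,\dots,\alpha_1)$, $\alpha^{\tt c}$ is the composition with $I(\alpha^{\tt c})=\{1,\dots,n-1\}\setminus I(\alpha)$, $\alpha^{\tt t}=(\alpha^{\tt r})^{\tt c}$. For a word $w$, $w^{\tt r}$ is its reversal and $\mathrm{Des}(w)=\{i:w_i>w_{i+1}\}$. *)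

theory Defs
  imports Main
begin

(* A basis element [w,n] of W is represented by the pair (w,n) with w a word of
   positive integers and max(w) <= n. *)
definition in_WW :: "nat list \<times> nat \<Rightarrow> bool" where
  "in_WW x = (\<forall>a\<in>set (fst x). 1 \<le> a \<and> a \<le> snd x)"

definition is_comp :: "nat \<Rightarrow> nat list \<Rightarrow> bool" where
  "is_comp m \<alpha> = ((\<forall>a\<in>set \<alpha>. 0 < a) \<and> sum_list \<alpha> = m)"

definition Iset :: "nat list \<Rightarrow> nat set" where
  "Iset \<alpha> = {sum_list (take k \<alpha>) | k. 1 \<le> k \<and> k < length \<alpha>}"

(* Des(w) = {i : w_i > w_{i+1}}, positions 1-indexed *)
definition Des :: "nat list \<Rightarrow> nat set" where
  "Des w = {i. 1 \<le> i \<and> i < length w \<and> w ! (i - 1) > w ! i}"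

definition comp_c :: "nat list \<Rightarrow> nat list" where
  "comp_c \<alpha> = (THE \<beta>. is_comp (sum_list \<alpha>) \<beta> \<and>
                 Iset \<beta> = {1..<sum_list \<alpha>} - Iset \<alpha>)"

definition comp_t :: "nat list \<Rightarrow> nat list" where
  "comp_t \<alpha> = comp_c (rev \<alpha>)"

(* Elements of QSym are represented by their coefficient functions in the
   monomial basis: f represents sum_alpha f(alpha) M_alpha (f supported on
   compositions). *)
type_synonym 'k qsym = "nat list \<Rightarrow> 'k"

definition fundL :: "nat list \<Rightarrow> 'k::field qsym" where
  "fundL \<alpha> = (\<lambda>\<beta>. if is_comp (sum_list \<alpha>) \<beta> \<and> Iset \<alpha> \<subseteq> Iset \<beta> then 1 else 0)"

definition zeta_le :: "nat list \<times> nat \<Rightarrow> 'k::field" where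
  "zeta_le x = (if sorted_wrt (\<le>) (fst x) then 1 else 0)"
definition zeta_ge :: "nat list \<times> nat \<Rightarrow> 'k::field" where
  "zeta_ge x = (if sorted_wrt (\<ge>) (fst x) then 1 else 0)"
definition zeta_lt :: "nat list \<times> nat \<Rightarrow> 'k::field" where
  "zeta_lt x = (if sorted_wrt (<) (fst x) then 1 else 0)"
definition zeta_gt :: "nat list \<times> nat \<Rightarrow> 'k::field" where
  "zeta_gt x = (if sorted_wrt (>) (fst x) then 1 else 0)"

fun chunks :: "nat list \<Rightarrow> 'a list \<Rightarrow> 'a list list" where
  "chunks [] w = []"
| "chunks (a # as) w = take a w # chunks as (drop a w)"

(* (zeta)_alpha([w,n]): the iterated deconcatenation coproduct of [w,n] into
   W^{\<otimes> m} is sum over splittings w = u_1...u_m of [u_1,n] \<otimes> ... \<otimes> [u_m,n];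
   projecting onto degrees alpha_1..alpha_m keeps the unique splitting with
   |u_i| = alpha_i (if sum alpha = l(w)), then apply zeta^{\<otimes> m} and multiply.
   For alpha = [] this is the counit. *)
definition zeta_alpha :: "(nat list \<times> nat \<Rightarrow> 'k::field) \<Rightarrow> nat list \<Rightarrow> nat list \<times> nat \<Rightarrow> 'k" where
  "zeta_alpha \<zeta> \<alpha> x =
     (if sum_list \<alpha> = length (fst x)
      then prod_list (map (\<lambda>u. \<zeta> (u, snd x)) (chunks \<alpha> (fst x))) else 0)"

definition Psi :: "(nat list \<times> nat \<Rightarrow> 'k::field) \<Rightarrow> nat list \<times> nat \<Rightarrow> 'k qsym" where
  "Psi \<zeta> x = (\<lambda>\<alpha>. if (\<forall>a\<in>set \<alpha>. 0 < a) then zeta_alpha \<zeta> \<alpha> x else 0)"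

end

theory Submission
  imports Defs
begin

(* If zeta is the indicator of R-sorted words for a transitive R, the coefficient of M_beta
   in Psi_zeta([v,n]) is 1 exactly when every block of v cut out by beta is R-sorted, i.e. when
   every position i at which R fails between v_i and v_(i+1) is a partial sum of beta.  For
   R = (<=) these positions form Des(w) = I(alpha), which gives L_alpha; for R = (>) they form
   the complement of Des(w), which is I(alpha^c).  Reversing a word reflects these positions
   by i |-> l(w) - i, and reversing a composition reflects I in the same way, which gives the
   two statements about w^r. *)

definition partial_sums :: "nat list \<Rightarrow> nat set" where
  "partial_sums \<beta> = (\<lambda>k. sum_list (take k \<beta>)) ` {..length \<beta>}"

lemma Iset_eq_image: "Iset \<beta> = (\<lambda>k. sum_list (take k \<beta>)) ` {1..<length \<beta>}"
  by (auto simp: Iset_def)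

lemma partial_sums_Nil [simp]: "partial_sums [] = {0}"
  by (simp add: partial_sums_def)

lemma partial_sums_Cons [simp]:
  "partial_sums (a # \<beta>) = insert 0 ((+) a ` partial_sums \<beta>)"
  by (simp add: partial_sums_def atMost_Suc_eq_insert_0 image_image)

lemma zero_in_partial_sums: "0 \<in> partial_sums \<beta>"
  unfolding partial_sums_def by (rule image_eqI[of _ _ 0]) auto

lemma hd_in_partial_sums: "a \<in> partial_sums (a # \<beta>)"
  using zero_in_partial_sums[of \<beta>] by (simp add: rev_image_eqI[of 0])

lemma partial_sums_eq_Iset:
  "partial_sums \<beta> = insert 0 (insert (sum_list \<beta>) (Iset \<beta>))"
proof -
  have "{..length \<beta>} = insert 0 (insert (length \<beta>) {1..<length \<beta>})"
    by auto
  then show ?thesis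
    by (simp add: partial_sums_def Iset_eq_image)
qed

lemma Iset_snoc: "xs \<noteq> [] \<Longrightarrow> Iset (xs @ [c]) = insert (sum_list xs) (Iset xs)"
proof -
  assume "xs \<noteq> []"
  then have "{1..<length (xs @ [c])} = insert (length xs) {1..<length xs}"
    by (auto simp: Suc_le_eq)
  then show ?thesis
    by (simp add: Iset_eq_image)
qed

lemma exists_comp_with_Iset: "S \<subseteq> {1..<m} \<Longrightarrow> \<exists>\<beta>. is_comp m \<beta> \<and> Iset \<beta> = S"
proof (induction m arbitrary: S rule: less_induct)
  case (less m)
  show ?case
  proof (cases "S = {}")
    case True
    then show ?thesis
      by (intro exI[of _ "if m = 0 then [] else [m]"]) (auto simp: is_comp_def Iset_def)
  next
    case False
    define s where "s = Max S"
    have "finite S"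
      using less.prems finite_subset by blast
    then have s: "s \<in> S" "\<forall>x\<in>S. x \<le> s"
      using False by (auto simp: s_def)
    then have "1 \<le> s" "s < m" "S - {s} \<subseteq> {1..<s}"
      using less.prems by fastforce+
    with less.IH obtain \<beta> where \<beta>: "is_comp s \<beta>" "Iset \<beta> = S - {s}"
      by blast
    have "\<beta> \<noteq> []"
      using \<beta>(1) \<open>1 \<le> s\<close> by (auto simp: is_comp_def)
    then have "Iset (\<beta> @ [m - s]) = S"
      using \<beta> s(1) by (auto simp: Iset_snoc is_comp_def)
    moreover have "is_comp m (\<beta> @ [m - s])"
      using \<beta>(1) \<open>s < m\<close> by (auto simp: is_comp_def)
    ultimately show ?thesis
      by auto
  qed
qed

lemma partial_sums_inj:
  assumes "\<forall>a\<in>set \<beta>. 0 < a" and "\<forall>c\<in>set \<gamma>. 0 < c"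
    and "partial_sums \<beta> = partial_sums \<gamma>"
  shows "\<beta> = \<gamma>"
  using assms
proof (induction \<beta> arbitrary: \<gamma>)
  case Nil
  show ?case
  proof (cases \<gamma>)
    case (Cons c \<gamma>')
    then have "c = 0"
      using Nil.prems(3) hd_in_partial_sums[of c \<gamma>'] by (metis partial_sums_Nil singletonD)
    then show ?thesis
      using Nil.prems(2) Cons by simp
  qed simp
next
  case (Cons a \<beta>)
  obtain c \<gamma>' where \<gamma>: "\<gamma> = c # \<gamma>'"
  proof (cases \<gamma>)
    case Nil
    then have "a = 0"
      using Cons.prems(3) hd_in_partial_sums[of a \<beta>] by (metis partial_sums_Nil singletonD)
    then show ?thesis
      using Cons.prems(1) by simp
  qed
  have "a \<in> partial_sums (c # \<gamma>')"
    using Cons.prems(3) \<gamma> hd_in_partial_sums by metis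
  moreover have "c \<in> partial_sums (a # \<beta>)"
    using Cons.prems(3) \<gamma> hd_in_partial_sums by metis
  moreover have "0 < a" "0 < c"
    using Cons.prems(1,2) \<gamma> by auto
  ultimately have "a = c"
    by auto
  have "0 \<notin> (+) a ` partial_sums \<beta>" "0 \<notin> (+) a ` partial_sums \<gamma>'"
    using \<open>0 < a\<close> by auto
  moreover have "insert 0 ((+) a ` partial_sums \<beta>) = insert 0 ((+) a ` partial_sums \<gamma>')"
    using Cons.prems(3) \<gamma> \<open>a = c\<close> by simp
  ultimately have "(+) a ` partial_sums \<beta> = (+) a ` partial_sums \<gamma>'"
    by (simp add: insert_ident)
  then have "partial_sums \<beta> = partial_sums \<gamma>'"
    by (simp add: inj_image_eq_iff)
  then have "\<beta> = \<gamma>'"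
    using Cons.prems(1,2) \<gamma> by (intro Cons.IH) auto
  then show ?case
    using \<gamma> \<open>a = c\<close> by simp
qed

lemma comp_eq_if_Iset_eq:
  assumes "is_comp m \<beta>" and "is_comp m \<gamma>" and "Iset \<beta> = Iset \<gamma>"
  shows "\<beta> = \<gamma>"
proof (rule partial_sums_inj)
  show "partial_sums \<beta> = partial_sums \<gamma>"
    using assms by (simp add: partial_sums_eq_Iset is_comp_def)
qed (use assms in \<open>simp_all add: is_comp_def\<close>)

lemma comp_c_spec:
  assumes "is_comp m \<alpha>"
  shows "is_comp m (comp_c \<alpha>) \<and> Iset (comp_c \<alpha>) = {1..<m} - Iset \<alpha>"
proof -
  obtain \<beta> where "is_comp m \<beta> \<and> Iset \<beta> = {1..<m} - Iset \<alpha>"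
    using exists_comp_with_Iset[of "{1..<m} - Iset \<alpha>" m] by blast
  then have unique: "\<exists>!\<beta>. is_comp m \<beta> \<and> Iset \<beta> = {1..<m} - Iset \<alpha>"
    by (intro ex1I[of _ \<beta>]) (simp, metis comp_eq_if_Iset_eq)
  have "comp_c \<alpha> = (THE \<beta>. is_comp m \<beta> \<and> Iset \<beta> = {1..<m} - Iset \<alpha>)"
    using assms by (simp add: comp_c_def is_comp_def)
  then show ?thesis
    using theI'[OF unique] by simp
qed

lemma reflect_atLeastLessThan: "(\<lambda>i. m - i) ` {1..<m} = {1..<m::nat}"
proof -
  have "i \<in> (\<lambda>i. m - i) ` {1..<m}" if "i \<in> {1..<m}" for i
    using that by (intro rev_image_eqI[of "m - i"]) auto
  then show ?thesis
    by auto
qed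

lemma reflect_Diff:
  assumes "A \<subseteq> {1..<m::nat}"
  shows "(\<lambda>i. m - i) ` ({1..<m} - A) = {1..<m} - (\<lambda>i. m - i) ` A"
proof -
  have "(\<lambda>i. m - i) ` ({1..<m} - A) = (\<lambda>i. m - i) ` {1..<m} - (\<lambda>i. m - i) ` A"
    using assms by (intro inj_on_image_set_diff[of _ "{1..<m}"]) (auto simp: inj_on_def)
  then show ?thesis
    by (simp only: reflect_atLeastLessThan)
qed

lemma Iset_rev: "Iset (rev \<alpha>) = (\<lambda>i. sum_list \<alpha> - i) ` Iset \<alpha>"
proof -
  let ?l = "length \<alpha>" and ?ps = "\<lambda>k. sum_list (take k \<alpha>)"
  have ps_rev: "sum_list (take k (rev \<alpha>)) = sum_list \<alpha> - ?ps (?l - k)" for k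
  proof -
    have "sum_list \<alpha> = ?ps (?l - k) + sum_list (drop (?l - k) \<alpha>)"
      by (metis append_take_drop_id sum_list_append)
    then show ?thesis
      by (simp add: take_rev)
  qed
  have "Iset (rev \<alpha>) = (\<lambda>j. sum_list \<alpha> - ?ps j) ` (\<lambda>k. ?l - k) ` {1..<?l}"
    by (simp add: Iset_eq_image ps_rev image_image)
  also have "\<dots> = (\<lambda>j. sum_list \<alpha> - ?ps j) ` {1..<?l}"
    by (simp only: reflect_atLeastLessThan)
  also have "\<dots> = (\<lambda>i. sum_list \<alpha> - i) ` Iset \<alpha>"
    by (simp add: Iset_eq_image image_image)
  finally show ?thesis .
qed

definition breaks :: "('a \<Rightarrow> 'a \<Rightarrow> bool) \<Rightarrow> 'a list \<Rightarrow> nat set" where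
  "breaks R w = {i. 1 \<le> i \<and> i < length w \<and> \<not> R (w ! (i - 1)) (w ! i)}"

lemma breaks_subset: "breaks R w \<subseteq> {1..<length w}"
  by (auto simp: breaks_def)

lemma Des_eq_breaks: "Des w = breaks (\<le>) w"
  by (auto simp: Des_def breaks_def)

lemma breaks_greater: "breaks (>) w = {1..<length w} - Des w"
  by (auto simp: Des_def breaks_def)

lemma breaks_rev: "breaks R (rev w) = (\<lambda>i. length w - i) ` breaks (\<lambda>x y. R y x) w"
proof -
  let ?m = "length w"
  have mirror: "i \<in> breaks R (rev w) \<longleftrightarrow> ?m - i \<in> breaks (\<lambda>x y. R y x) w"
    if "i < ?m" for i
    using that by (auto simp: breaks_def rev_nth Suc_diff_Suc)
  show ?thesis
  proof (intro equalityI subsetI)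
    fix i
    assume i: "i \<in> breaks R (rev w)"
    then have "i < ?m"
      using breaks_subset[of R "rev w"] by auto
    then show "i \<in> (\<lambda>i. ?m - i) ` breaks (\<lambda>x y. R y x) w"
      using i mirror by (intro rev_image_eqI[of "?m - i"]) auto
  next
    fix i
    assume "i \<in> (\<lambda>i. ?m - i) ` breaks (\<lambda>x y. R y x) w"
    then obtain j where j: "j \<in> breaks (\<lambda>x y. R y x) w" "i = ?m - j"
      by blast
    then have "1 \<le> j" "j < ?m"
      using breaks_subset[of "\<lambda>x y. R y x" w] by auto
    then show "i \<in> breaks R (rev w)"
      using j mirror[of i] by auto
  qed
qed

lemma breaks_empty_iff:
  "breaks R w = {} \<longleftrightarrow> (\<forall>i. Suc i < length w \<longrightarrow> R (w ! i) (w ! Suc i))"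
proof -
  have "i \<in> breaks R w \<longleftrightarrow>
      (\<exists>j. i = Suc j \<and> Suc j < length w \<and> \<not> R (w ! j) (w ! Suc j))" for i
    by (cases i) (auto simp: breaks_def)
  then show ?thesis
    by auto
qed

lemma sorted_wrt_iff_breaks_empty: "transp R \<Longrightarrow> sorted_wrt R w \<longleftrightarrow> breaks R w = {}"
  by (simp add: sorted_wrt_iff_nth_Suc_transp breaks_empty_iff)

lemma breaks_take: "a \<le> length w \<Longrightarrow> breaks R (take a w) = breaks R w \<inter> {..<a}"
  by (auto simp: breaks_def)

lemma breaks_drop:
  "a \<le> length w \<Longrightarrow> (+) a ` breaks R (drop a w) = breaks R w \<inter> {a<..}"
proof (intro equalityI subsetI)
  fix i
  assume "i \<in> breaks R w \<inter> {a<..}"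
  then have "i - a \<in> breaks R (drop a w)" "i = a + (i - a)"
    by (auto simp: breaks_def Suc_diff_Suc)
  then show "i \<in> (+) a ` breaks R (drop a w)"
    by (rule rev_image_eqI)
qed (auto simp: breaks_def)

lemma chunks_sorted_iff:
  assumes "transp R" and "sum_list \<beta> = length w"
  shows "(\<forall>u\<in>set (chunks \<beta> w). sorted_wrt R u) \<longleftrightarrow> breaks R w \<subseteq> partial_sums \<beta>"
  using assms(2)
proof (induction \<beta> arbitrary: w)
  case Nil
  then show ?case
    by (simp add: breaks_def)
next
  case (Cons a \<beta>)
  have a: "a \<le> length w"
    using Cons.prems by simp
  have "a \<in> (+) a ` partial_sums \<beta>" "0 \<notin> breaks R w"
    using zero_in_partial_sums[of \<beta>] by (auto simp: breaks_def)
  then have "breaks R w \<subseteq> partial_sums (a # \<beta>) \<longleftrightarrow>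
      breaks R w - {a} \<subseteq> (+) a ` partial_sums \<beta>"
    by auto
  also have "\<dots> \<longleftrightarrow>
      breaks R (take a w) = {} \<and> (+) a ` breaks R (drop a w) \<subseteq> (+) a ` partial_sums \<beta>"
  proof -
    have decomp: "breaks R w - {a} = breaks R (take a w) \<union> (+) a ` breaks R (drop a w)"
      using breaks_take[OF a] breaks_drop[OF a] by auto
    have "breaks R (take a w) \<inter> (+) a ` partial_sums \<beta> = {}"
      using breaks_take[OF a] by auto
    then show ?thesis
      unfolding decomp Un_subset_iff by blast
  qed
  also have "\<dots> \<longleftrightarrow> (\<forall>u\<in>set (chunks (a # \<beta>) w). sorted_wrt R u)"
    using Cons.IH[of "drop a w"] Cons.prems sorted_wrt_iff_breaks_empty[OF assms(1)]
    by (simp add: inj_image_subset_iff[OF inj_on_add])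
  finally show ?case ..
qed

lemma prod_list_indicator:
  "prod_list (map (\<lambda>u. if P u then 1 else 0) xs) =
    (if \<forall>u\<in>set xs. P u then 1 else (0::'a::semiring_1))"
  by (induction xs) auto

lemma Psi_sorted_eq_fundL:
  assumes "transp R" and \<zeta>: "\<And>x. \<zeta> x = (if sorted_wrt R (fst x) then 1 else 0)"
    and "sum_list \<gamma> = length v" and "breaks R v = Iset \<gamma>"
  shows "Psi \<zeta> (v, n) = fundL \<gamma>"
proof
  fix \<beta>
  show "Psi \<zeta> (v, n) \<beta> = fundL \<gamma> \<beta>"
  proof (cases "is_comp (length v) \<beta>")
    case True
    have "(\<forall>u\<in>set (chunks \<beta> v). sorted_wrt R u) \<longleftrightarrow> breaks R v \<subseteq> partial_sums \<beta>"
      using True assms(1) by (intro chunks_sorted_iff) (simp_all add: is_comp_def)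
    also have "\<dots> \<longleftrightarrow> Iset \<gamma> \<subseteq> Iset \<beta>"
      using True breaks_subset[of R v] assms(4)
      by (auto simp: partial_sums_eq_Iset is_comp_def subset_iff)
    finally show ?thesis
      using True assms(3)
      by (simp add: Psi_def zeta_alpha_def fundL_def \<zeta> prod_list_indicator is_comp_def)
  next
    case False
    then show ?thesis
      using assms(3) by (auto simp: Psi_def zeta_alpha_def fundL_def is_comp_def)
  qed
qed

theorem proposition5p5:
  fixes w :: "nat list" and n :: nat and \<alpha> :: "nat list"
  assumes "in_WW (w, n)"
    and "is_comp (length w) \<alpha>"
    and "Des w = Iset \<alpha>"
  shows "Psi (zeta_le :: _ \<Rightarrow> 'k::field) (w, n) = fundL \<alpha>
       \<and> Psi (zeta_gt :: _ \<Rightarrow> 'k::field) (w, n) = fundL (comp_c \<alpha>)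
       \<and> Psi (zeta_ge :: _ \<Rightarrow> 'k::field) (rev w, n) = fundL (rev \<alpha>)
       \<and> Psi (zeta_lt :: _ \<Rightarrow> 'k::field) (rev w, n) = fundL (comp_t \<alpha>)"
proof -
  let ?m = "length w"
  have sum_\<alpha>: "sum_list \<alpha> = ?m"
    using assms(2) by (simp add: is_comp_def)
  have Des_subset: "Des w \<subseteq> {1..<?m}"
    using breaks_subset by (simp add: Des_eq_breaks)
  have comp_c: "is_comp ?m (comp_c \<alpha>)" "Iset (comp_c \<alpha>) = {1..<?m} - Des w"
    using comp_c_spec[OF assms(2)] assms(3) by simp_all
  have "is_comp ?m (rev \<alpha>)"
    using assms(2) by (simp add: is_comp_def)
  then have comp_t: "is_comp ?m (comp_t \<alpha>)" "Iset (comp_t \<alpha>) = {1..<?m} - Iset (rev \<alpha>)"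
    using comp_c_spec by (simp_all add: comp_t_def)
  have rev_\<alpha>: "Iset (rev \<alpha>) = (\<lambda>i. ?m - i) ` Des w"
    using assms(3) sum_\<alpha> by (simp add: Iset_rev)
  show ?thesis
  proof (intro conjI)
    show "Psi (zeta_le :: _ \<Rightarrow> 'k) (w, n) = fundL \<alpha>"
      using assms(3) sum_\<alpha>
      by (intro Psi_sorted_eq_fundL[of "(\<le>)"]) (simp_all add: zeta_le_def Des_eq_breaks)
    show "Psi (zeta_gt :: _ \<Rightarrow> 'k) (w, n) = fundL (comp_c \<alpha>)"
      using comp_c
      by (intro Psi_sorted_eq_fundL[of "(>)"])
        (simp_all add: zeta_gt_def breaks_greater is_comp_def)
    show "Psi (zeta_ge :: _ \<Rightarrow> 'k) (rev w, n) = fundL (rev \<alpha>)"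
      using rev_\<alpha> sum_\<alpha>
      by (intro Psi_sorted_eq_fundL[of "(\<ge>)"])
        (simp_all add: zeta_ge_def breaks_rev Des_eq_breaks)
    show "Psi (zeta_lt :: _ \<Rightarrow> 'k) (rev w, n) = fundL (comp_t \<alpha>)"
      using comp_t rev_\<alpha> reflect_Diff[OF Des_subset]
      by (intro Psi_sorted_eq_fundL[of "(<)"])
        (simp_all add: zeta_lt_def breaks_rev breaks_greater is_comp_def)
  qed
qed

end
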